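(* Let $K$ be a field of characteristic $\neq2$ and $\tau=(1,-1,-1,-1)$. Then $\mathrm{Aut}\,A_\tau=G_5$, where $G_5=\{(\alpha_1x_1,\beta_2x_2)\mid \alpha_1,\beta_2\in K^*\}$ is the group of toric automorphisms of $K\langle x_1,x_2\rangle$.
   Context: $A=K\langle x_1,x_2\rangle$ is the free associative algebra with unit on $x_1,x_2$; $\varphi=(f_1,f_2)$ denotes the algebra endomorphism with $\varphi(x_1)=f_1$, $\varphi(x_2)=f_2$. For $q_{ij}\in K$, the diagonal braiding $\tau=(q_{11},q_{12},q_{21},q_{22})$ on $A$ is the linear map $A\otimes A\to A\otimes A$ given on words $u,v$ by $(u\otimes v)\tau=q_{11}^{s_1t_1}q_{12}^{s_1t_2}q_{21}^{s_2t_1}q_{22}^{s_2t_2}\,(v\otimes u)$, where $s_i$ (resp. $t_i$) is the number of occurrences of $x_i$ in $u$ (resp. $v$). $A_\tau$ is $A$ equipped with $\tau$, and $\mathrm{Aut}\,A_\tau$ is the group of algebra automorphisms $\varphi$ of $A$ satisfying $(\varphi\otimes\varphi)((w)\tau)=((\varphi\otimes\varphi)(w))\tau$ for all $w\in A\otimes A$, viewed as a subgroup of $\mathrm{Aut}\,K\langle x_1,x_2\rangle$. *)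

theory Defs
  imports Main
begin

text \<open>The free associative unital algebra K<x1,x2>: elements are finitely supported
  coefficient functions on words over the two letters.\<close>

datatype var = X1 | X2

type_synonym word = "var list"
type_synonym 'k fa = "word \<Rightarrow> 'k"
type_synonym 'k fa2 = "word \<times> word \<Rightarrow> 'k"

definition FA :: "('k::zero) fa set" where
  "FA = {p. finite {w. p w \<noteq> 0}}"

definition FA2 :: "('k::zero) fa2 set" where
  "FA2 = {t. finite {uv. t uv \<noteq> 0}}"

definition fa_one :: "('k::{zero,one}) fa" where
  "fa_one = (\<lambda>w. if w = [] then 1 else 0)"

definition fa_var :: "var \<Rightarrow> ('k::{zero,one}) fa" where
  "fa_var a = (\<lambda>w. if w = [a] then 1 else 0)"

definition fa_smult :: "'k::times \<Rightarrow> 'k fa \<Rightarrow> 'k fa" where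
  "fa_smult c p = (\<lambda>w. c * p w)"

definition fa_mult :: "('k::comm_semiring_1) fa \<Rightarrow> 'k fa \<Rightarrow> 'k fa" where
  "fa_mult p q = (\<lambda>w. \<Sum>(u, v) \<in> {(u, v). u @ v = w}. p u * q v)"

definition word_img :: "(var \<Rightarrow> ('k::comm_semiring_1) fa) \<Rightarrow> word \<Rightarrow> 'k fa" where
  "word_img f w = foldr (\<lambda>a acc. fa_mult (f a) acc) w fa_one"

definition endo :: "(var \<Rightarrow> ('k::comm_semiring_1) fa) \<Rightarrow> 'k fa \<Rightarrow> 'k fa" where
  "endo f p = (\<lambda>z. \<Sum>w \<in> {w. p w \<noteq> 0}. p w * word_img f w z)"

text \<open>phi tensor phi on A tensor A\<close>
definition endo2 :: "(var \<Rightarrow> ('k::comm_semiring_1) fa) \<Rightarrow> 'k fa2 \<Rightarrow> 'k fa2" where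
  "endo2 f t = (\<lambda>(a, b). \<Sum>(u, v) \<in> {uv. t uv \<noteq> 0}.
       t (u, v) * word_img f u a * word_img f v b)"

definition cnt :: "var \<Rightarrow> word \<Rightarrow> nat" where
  "cnt i w = length (filter (\<lambda>a. a = i) w)"

text \<open>braiding coefficient for (u tensor v) tau = coef q u v (v tensor u)\<close>
definition braid_coef :: "(var \<Rightarrow> var \<Rightarrow> 'k::comm_monoid_mult) \<Rightarrow> word \<Rightarrow> word \<Rightarrow> 'k" where
  "braid_coef q u v = q X1 X1 ^ (cnt X1 u * cnt X1 v) * q X1 X2 ^ (cnt X1 u * cnt X2 v)
     * q X2 X1 ^ (cnt X2 u * cnt X1 v) * q X2 X2 ^ (cnt X2 u * cnt X2 v)"

definition braid :: "(var \<Rightarrow> var \<Rightarrow> 'k::comm_semiring_1) \<Rightarrow> 'k fa2 \<Rightarrow> 'k fa2" where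
  "braid q t = (\<lambda>(a, b). braid_coef q b a * t (b, a))"

definition is_aut :: "(var \<Rightarrow> ('k::comm_semiring_1) fa) \<Rightarrow> bool" where
  "is_aut f \<longleftrightarrow> f X1 \<in> FA \<and> f X2 \<in> FA \<and> bij_betw (endo f) FA FA"

definition Aut_braided :: "(var \<Rightarrow> var \<Rightarrow> 'k::comm_semiring_1) \<Rightarrow> ('k fa \<times> 'k fa) set" where
  "Aut_braided q = {(f1, f2). is_aut (case_var f1 f2) \<and>
     (\<forall>t \<in> FA2. endo2 (case_var f1 f2) (braid q t) = braid q (endo2 (case_var f1 f2) t))}"

definition tau5 :: "var \<Rightarrow> var \<Rightarrow> 'k::comm_ring_1" where
  "tau5 i j = (if i = X1 \<and> j = X1 then 1 else -1)"

definition G5 :: "('k::field fa \<times> 'k fa) set" where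
  "G5 = {(fa_smult \<alpha> (fa_var X1), fa_smult \<beta> (fa_var X2)) | \<alpha> \<beta>. \<alpha> \<noteq> 0 \<and> \<beta> \<noteq> 0}"

end

(* The braiding condition applied to x_i tensor x_j says that every monomial b of f_i and
   every monomial a of f_j satisfy tau(b, a) = tau(x_i, x_j). For tau = (1,-1,-1,-1) this
   is a parity condition: the monomials of f_1 have an odd number of x_1 and an even number
   of x_2, those of f_2 an odd number of x_2. Hence the leading words L_1, L_2 of f_1, f_2
   (for the degree-lexicographic order) are not powers of a common word, so by the defect
   theorem they generate a free monoid. Then the leading word of phi(p) is the image of the
   leading word of p under x_i |-> L_i, with no cancellation, and surjectivity of phi forces
   L_1 = x_1, L_2 = x_2. With the parities this leaves only phi = (a x_1, b x_2). Conversely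
   toric automorphisms rescale words and therefore commute with every diagonal braiding. *)

theory Submission
  imports Defs
begin

section \<open>Ranking words\<close>

text \<open>rank reads a word as a base-3 numeral with digits 1 and 2, so it orders words by
  length and then lexicographically.\<close>

fun letter_digit :: "var \<Rightarrow> nat" where
  "letter_digit X1 = 1"
| "letter_digit X2 = 2"

definition rank :: "word \<Rightarrow> nat" where
  "rank w = foldl (\<lambda>n a. 3 * n + letter_digit a) 0 w"

lemma rank_Nil [simp]: "rank [] = 0"
  by (simp add: rank_def)

lemma rank_snoc: "rank (w @ [a]) = 3 * rank w + letter_digit a"
  by (simp add: rank_def)

lemma letter_digit_bounds: "1 \<le> letter_digit a" "letter_digit a \<le> 2"
  by (cases a; simp)+

lemma rank_append: "rank (u @ v) = rank u * 3 ^ length v + rank v"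
  by (induction v rule: rev_induct) (simp_all add: rank_snoc flip: append_assoc)

lemma rank_bounds: "rank w < 3 ^ length w \<and> 3 ^ length w \<le> 2 * rank w + 1"
proof (induction w rule: rev_induct)
  case (snoc a w)
  then show ?case using letter_digit_bounds[of a] by (simp add: rank_snoc)
qed simp

lemma rank_inj: "rank u = rank v \<Longrightarrow> u = v"
proof (induction u arbitrary: v rule: rev_induct)
  case Nil
  show ?case
  proof (cases v rule: rev_exhaust)
    case (snoc v' b)
    then show ?thesis using Nil letter_digit_bounds[of b] by (simp add: rank_snoc)
  qed simp
next
  case (snoc a u)
  show ?case
  proof (cases v rule: rev_exhaust)
    case Nil
    then show ?thesis using snoc.prems letter_digit_bounds[of a] by (simp add: rank_snoc)
  next
    case (snoc v' b)
    with snoc.prems have eq: "3 * rank u + letter_digit a = 3 * rank v' + letter_digit b"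
      by (simp add: rank_snoc)
    then have "letter_digit a = letter_digit b"
      using letter_digit_bounds[of a] letter_digit_bounds[of b] by presburger
    then have "a = b" by (cases a; cases b) auto
    moreover have "rank u = rank v'" using eq \<open>letter_digit a = letter_digit b\<close> by simp
    ultimately show ?thesis using snoc.IH \<open>v = v' @ [b]\<close> by simp
  qed
qed

lemma rank_less_if_shorter: "length v < length u \<Longrightarrow> rank v < rank u"
proof -
  assume "length v < length u"
  then have "3 * 3 ^ length v \<le> (3::nat) ^ length u"
    using power_increasing[of "Suc (length v)" "length u" "3::nat"] by simp
  then show ?thesis using rank_bounds[of v] rank_bounds[of u] by linarith
qed

lemma length_le_if_rank_le: "rank v \<le> rank u \<Longrightarrow> length v \<le> length u"
  using rank_less_if_shorter by (meson leD leI)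

lemma rank_append_mono_left: "rank u \<le> rank u' \<Longrightarrow> rank (u @ v) \<le> rank (u' @ v)"
  by (simp add: rank_append)

lemma rank_append_strict_mono_left: "rank u < rank u' \<Longrightarrow> rank (u @ v) < rank (u' @ v)"
  by (simp add: rank_append)

lemma rank_append_mono_right: "rank v \<le> rank v' \<Longrightarrow> rank (u @ v) \<le> rank (u @ v')"
proof -
  assume le: "rank v \<le> rank v'"
  then have "(3::nat) ^ length v \<le> 3 ^ length v'"
    by (simp add: power_increasing length_le_if_rank_le)
  then show ?thesis using le unfolding rank_append by (meson add_mono mult_le_mono2)
qed

lemma rank_le_2: "rank u \<le> 2 \<Longrightarrow> u = [] \<or> u = [X1] \<or> u = [X2]"
proof -
  assume "rank u \<le> 2"
  then have "length u \<le> length [X2]" by (intro length_le_if_rank_le) (simp add: rank_def)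
  then show ?thesis by (cases u) (auto intro: var.exhaust)
qed

section \<open>Relations between the images of two letters\<close>

lemma ex_var_neq: "\<exists>b::var. b \<noteq> a"
  by (cases a) (use var.distinct in blast)+

lemma var_eq_either: "a \<noteq> b \<Longrightarrow> (c::var) = a \<or> c = b"
  by (cases a; cases b; cases c) auto

definition prefix_with :: "var \<Rightarrow> var \<Rightarrow> word" where
  "prefix_with a c = (if c = a then [a] else [a, c])"

lemma prefix_with_self [simp]: "prefix_with a a = [a]"
  by (simp add: prefix_with_def)

lemma prefix_with_other [simp]: "c \<noteq> a \<Longrightarrow> prefix_with a c = [a, c]"
  by (simp add: prefix_with_def)

lemma concat_map_prefix_with_Cons: "concat (map (prefix_with a) ws) = c # r \<Longrightarrow> c = a"
  by (cases ws) (auto simp: prefix_with_def split: if_splits)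

lemma inj_concat_map_prefix_with: "inj (\<lambda>ws. concat (map (prefix_with a) ws))"
proof (rule injI)
  fix ws ws' :: word
  show "concat (map (prefix_with a) ws) = concat (map (prefix_with a) ws') \<Longrightarrow> ws = ws'"
  proof (induction ws arbitrary: ws')
    case Nil
    then show ?case by (cases ws') (auto simp: prefix_with_def split: if_splits)
  next
    case (Cons c ws)
    then obtain c' ws'' where ws': "ws' = c' # ws''"
      by (cases ws') (auto simp: prefix_with_def split: if_splits)
    have "c = c' \<and> concat (map (prefix_with a) ws) = concat (map (prefix_with a) ws'')"
      using Cons.prems concat_map_prefix_with_Cons[of a ws] concat_map_prefix_with_Cons[of a ws'']
      by (cases "c = a"; cases "c' = a") (auto simp: ws' dest: sym)
    then show ?case using Cons.IH ws' by simp
  qed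
qed

lemma concat_map_relation_overlap:
  fixes L :: "var \<Rightarrow> 'a list"
  assumes "concat (map L ws) = concat (map L ws')" "ws \<noteq> ws'"
  shows "\<exists>a b xs ys. a \<noteq> b \<and> L a @ xs = L b @ ys"
  using assms
proof (induction ws arbitrary: ws')
  case Nil
  then obtain c ws'' where "ws' = c # ws''" "L c = []" by (cases ws') auto
  moreover obtain b where "b \<noteq> c" using ex_var_neq by blast
  ultimately show ?case by (metis append.right_neutral self_append_conv2)
next
  case (Cons c ws)
  show ?case
  proof (cases ws')
    case Nil
    then have "L c = []" using Cons.prems by simp
    moreover obtain b where "b \<noteq> c" using ex_var_neq by blast
    ultimately show ?thesis by (metis append.right_neutral self_append_conv2)
  next
    case (Cons c' ws'')
    show ?thesis
    proof (cases "c = c'")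
      case True
      then show ?thesis using Cons.IH[of ws''] Cons.prems \<open>ws' = c' # ws''\<close> by simp
    next
      case False
      then show ?thesis using Cons.prems \<open>ws' = c' # ws''\<close> by auto
    qed
  qed
qed

text \<open>Nielsen reduction: if L b = L a @ us, then L factors through the injective
  substitution prefix_with a followed by L with L b replaced by the shorter word us.\<close>

lemma concat_map_relation_imp_common_power:
  fixes L :: "var \<Rightarrow> 'a list"
  assumes "concat (map L ws) = concat (map L ws')" "ws \<noteq> ws'"
  shows "\<exists>z. \<forall>c. \<exists>n. L c = concat (replicate n z)"
  using assms
proof (induction "length (L X1) + length (L X2)" arbitrary: L ws ws' rule: less_induct)
  case less
  show ?case
  proof (cases "\<exists>a. L a = []")
    case True
    then obtain a b where "L a = []" "b \<noteq> a" using ex_var_neq by blast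
    then have "L c = concat (replicate (if c = a then 0 else 1) (L b))" for c
      using var_eq_either[of b a c] by auto
    then show ?thesis by blast
  next
    case nonempty: False
    obtain a b xs ys where "a \<noteq> b" "L a @ xs = L b @ ys"
      using concat_map_relation_overlap[OF less.prems] by blast
    then obtain a b us where ab: "a \<noteq> b" "L b = L a @ us"
      by (auto simp: append_eq_append_conv2) metis+
    define L' where "L' = L(b := us)"
    have "concat (map L' (prefix_with a c)) = L c" for c
      using var_eq_either[OF ab(1), of c] ab by (auto simp: L'_def prefix_with_def)
    then have factor: "concat (map L w) = concat (map L' (concat (map (prefix_with a) w)))" for w
      by (induction w) simp_all
    have "concat (map L' (concat (map (prefix_with a) ws)))
        = concat (map L' (concat (map (prefix_with a) ws')))"
      using less.prems(1) by (simp only: factor)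
    moreover have "concat (map (prefix_with a) ws) \<noteq> concat (map (prefix_with a) ws')"
      using less.prems(2) inj_concat_map_prefix_with[of a] by (auto dest: injD)
    moreover have "length (L' X1) + length (L' X2) < length (L X1) + length (L X2)"
      using nonempty ab by (cases b) (auto simp: L'_def)
    ultimately obtain z n where n: "\<And>c. L' c = concat (replicate (n c) z)"
      using less.hyps by metis
    have "L c = concat (replicate (if c = b then n a + n b else n c) z)" for c
      using n[of a] n[of b] n[of c] ab by (auto simp: L'_def replicate_add)
    then show ?thesis by blast
  qed
qed

lemma finite_append_splits: "finite {(u, v). u @ v = w}"
proof -
  have "{(u, v). u @ v = w} = (\<lambda>i. (take i w, drop i w)) ` {0..length w}"
  proof safe
    fix u v assume "w = u @ v"
    then show "(u, v) \<in> (\<lambda>i. (take i (u @ v), drop i (u @ v))) ` {0..length (u @ v)}"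
      by (intro image_eqI[where x = "length u"]) auto
  qed auto
  then show ?thesis by simp
qed

lemma fa_mult_one: "fa_mult p fa_one = p"
proof
  fix w
  have "fa_mult p fa_one w = (\<Sum>x \<in> {(u, v). u @ v = w}. if x = (w, []) then p w else 0)"
    unfolding fa_mult_def fa_one_def by (rule sum.cong) (auto split: if_splits)
  also have "\<dots> = p w"
    by (simp add: finite_append_splits)
  finally show "fa_mult p fa_one w = p w" .
qed

lemma word_img_Nil: "word_img f [] = fa_one"
  by (simp add: word_img_def)

lemma word_img_Cons: "word_img f (a # w) = fa_mult (f a) (word_img f w)"
  by (simp add: word_img_def)

lemma word_img_single: "word_img f [a] = f a"
  by (simp add: word_img_Cons word_img_Nil fa_mult_one)

lemma support_fa_var: "{w. (fa_var a :: 'k::zero_neq_one fa) w \<noteq> 0} = {[a]}"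
  by (auto simp: fa_var_def)

lemma endo_fa_var: "endo f (fa_var a) = f a"
  by (simp add: endo_def support_fa_var fa_var_def word_img_single)

lemma endo_zero: "endo f (\<lambda>_. 0) = (\<lambda>_. 0)"
  by (simp add: endo_def)

lemma fa_var_in_FA: "fa_var a \<in> (FA :: 'k::zero_neq_one fa set)"
  by (simp add: FA_def support_fa_var)

lemma zero_in_FA: "(\<lambda>_. 0) \<in> FA"
  by (simp add: FA_def)

lemma fa_var_nonzero: "fa_var a \<noteq> (\<lambda>_. 0 :: 'k::zero_neq_one)"
  by (metis fa_var_def zero_neq_one)

section \<open>Leading words\<close>

definition is_leading_word :: "'k::zero fa \<Rightarrow> word \<Rightarrow> bool" where
  "is_leading_word p w \<longleftrightarrow> p w \<noteq> 0 \<and> (\<forall>u. p u \<noteq> 0 \<longrightarrow> rank u \<le> rank w)"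

lemma leading_word_unique: "is_leading_word p u \<Longrightarrow> is_leading_word p v \<Longrightarrow> u = v"
  unfolding is_leading_word_def by (meson rank_inj order_antisym)

lemma leading_word_exists:
  assumes "p \<in> FA" "p \<noteq> (\<lambda>_. 0)"
  shows "\<exists>w. is_leading_word p w"
proof -
  let ?S = "{w. p w \<noteq> 0}"
  have fin: "finite (rank ` ?S)" using assms(1) by (simp add: FA_def)
  have ne: "rank ` ?S \<noteq> {}" using assms(2) by auto
  obtain w where "w \<in> ?S" "rank w = Max (rank ` ?S)" using Max_in[OF fin ne] by auto
  then show ?thesis unfolding is_leading_word_def using Max_ge[OF fin] by auto
qed

lemma leading_word_fa_var: "is_leading_word (fa_var c :: 'k::zero_neq_one fa) [c]"
  unfolding is_leading_word_def fa_var_def by auto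

lemma leading_word_fa_one: "is_leading_word (fa_one :: 'k::zero_neq_one fa) []"
  unfolding is_leading_word_def fa_one_def by auto

lemma leading_word_fa_mult:
  fixes p q :: "'k::semidom fa"
  assumes p: "is_leading_word p u0" and q: "is_leading_word q v0"
  shows "is_leading_word (fa_mult p q) (u0 @ v0)"
proof -
  have split_le: "rank (u @ v) \<le> rank (u0 @ v0)" and
       split_eq: "rank (u @ v) = rank (u0 @ v0) \<Longrightarrow> u = u0"
    if "p u * q v \<noteq> 0" for u v
  proof -
    from that have le: "rank u \<le> rank u0" "rank v \<le> rank v0"
      using p q unfolding is_leading_word_def by auto
    have "rank (u @ v) \<le> rank (u0 @ v)" using le(1) by (rule rank_append_mono_left)
    also have "\<dots> \<le> rank (u0 @ v0)" using le(2) by (rule rank_append_mono_right)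
    finally show "rank (u @ v) \<le> rank (u0 @ v0)" .
    show "u = u0" if "rank (u @ v) = rank (u0 @ v0)"
    proof (rule ccontr)
      assume "u \<noteq> u0"
      then have "rank u < rank u0" using le(1) rank_inj by (meson le_neq_implies_less)
      then have "rank (u @ v) < rank (u0 @ v)" by (rule rank_append_strict_mono_left)
      also have "\<dots> \<le> rank (u0 @ v0)" using le(2) by (rule rank_append_mono_right)
      finally show False using that by simp
    qed
  qed
  let ?S = "{(u, v). u @ v = u0 @ v0}"
  have "fa_mult p q (u0 @ v0) = p u0 * q v0 + (\<Sum>(u, v) \<in> ?S - {(u0, v0)}. p u * q v)"
    unfolding fa_mult_def by (subst sum.remove[OF finite_append_splits, of "(u0, v0)"]) auto
  also have "(\<Sum>(u, v) \<in> ?S - {(u0, v0)}. p u * q v) = 0"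
    by (rule sum.neutral) (use split_eq in fastforce)
  finally have "fa_mult p q (u0 @ v0) \<noteq> 0"
    using p q unfolding is_leading_word_def by simp
  moreover have "rank w \<le> rank (u0 @ v0)" if "fa_mult p q w \<noteq> 0" for w
    using that unfolding fa_mult_def
    by (auto elim: sum.not_neutral_contains_not_neutral dest: split_le)
  ultimately show ?thesis unfolding is_leading_word_def by blast
qed

lemma leading_word_word_img:
  fixes f :: "var \<Rightarrow> 'k::semidom fa"
  assumes "\<And>a. is_leading_word (f a) (L a)"
  shows "is_leading_word (word_img f w) (concat (map L w))"
  by (induction w)
    (simp_all add: word_img_Cons word_img_Nil leading_word_fa_one leading_word_fa_mult assms)

text \<open>Injectivity of L makes the leading words of the images of distinct words distinct,
  so the largest of them cannot cancel.\<close>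

lemma leading_word_endo:
  fixes f :: "var \<Rightarrow> 'k::semidom fa"
  assumes "p \<in> FA" "p \<noteq> (\<lambda>_. 0)" "\<And>a. is_leading_word (f a) (L a)"
    and inj: "inj (\<lambda>w. concat (map L w))"
  shows "\<exists>w. is_leading_word (endo f p) (concat (map L w))"
proof -
  let ?S = "{w. p w \<noteq> 0}" and ?r = "\<lambda>w. rank (concat (map L w))"
  have finS: "finite ?S" using assms(1) by (simp add: FA_def)
  have fin: "finite (?r ` ?S)" and ne: "?r ` ?S \<noteq> {}" using finS assms(2) by auto
  obtain w0 where w0: "w0 \<in> ?S" "?r w0 = Max (?r ` ?S)" using Max_in[OF fin ne] by auto
  have max: "?r w \<le> ?r w0" if "w \<in> ?S" for w
    using Max_ge[OF fin] that w0 by auto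
  have img: "is_leading_word (word_img f w) (concat (map L w))" for w
    by (rule leading_word_word_img[OF assms(3)])
  have others: "p w * word_img f w (concat (map L w0)) = 0" if "w \<in> ?S - {w0}" for w
  proof (rule ccontr)
    assume "p w * word_img f w (concat (map L w0)) \<noteq> 0"
    then have "?r w0 \<le> ?r w" using img[of w] unfolding is_leading_word_def by auto
    then have "concat (map L w0) = concat (map L w)"
      using max that by (intro rank_inj) (meson DiffD1 order_antisym)
    then show False using inj that by (auto dest: injD)
  qed
  have "endo f p (concat (map L w0))
      = p w0 * word_img f w0 (concat (map L w0))
        + (\<Sum>w \<in> ?S - {w0}. p w * word_img f w (concat (map L w0)))"
    unfolding endo_def by (subst sum.remove[OF finS w0(1)]) auto
  also have "(\<Sum>w \<in> ?S - {w0}. p w * word_img f w (concat (map L w0))) = 0"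
    by (rule sum.neutral) (use others in auto)
  finally have "endo f p (concat (map L w0)) \<noteq> 0"
    using w0(1) img[of w0] unfolding is_leading_word_def by simp
  moreover have "rank z \<le> ?r w0" if "endo f p z \<noteq> 0" for z
  proof -
    from that obtain w where w: "w \<in> ?S" "p w * word_img f w z \<noteq> 0"
      unfolding endo_def by (auto elim: sum.not_neutral_contains_not_neutral)
    then have "rank z \<le> ?r w" using img[of w] unfolding is_leading_word_def by auto
    then show ?thesis using max[OF w(1)] by linarith
  qed
  ultimately show ?thesis unfolding is_leading_word_def by blast
qed

section \<open>Toric automorphisms\<close>

definition fa_single :: "'k::zero \<Rightarrow> word \<Rightarrow> 'k fa" where
  "fa_single c u = (\<lambda>w. if w = u then c else 0)"

lemma fa_mult_fa_single: "fa_mult (fa_single c u) (fa_single d v) = fa_single (c * d) (u @ v)"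
proof
  fix w
  have "fa_mult (fa_single c u) (fa_single d v) w
      = (\<Sum>x \<in> {(x, y). x @ y = w}. if x = (u, v) then c * d else 0)"
    unfolding fa_mult_def fa_single_def by (rule sum.cong) (auto split: if_splits)
  also have "\<dots> = fa_single (c * d) (u @ v) w"
    by (simp add: finite_append_splits fa_single_def)
  finally show "fa_mult (fa_single c u) (fa_single d v) w = fa_single (c * d) (u @ v) w" .
qed

definition toric_weight :: "'k::comm_monoid_mult \<Rightarrow> 'k \<Rightarrow> word \<Rightarrow> 'k" where
  "toric_weight \<alpha> \<beta> w = \<alpha> ^ cnt X1 w * \<beta> ^ cnt X2 w"

abbreviation toric :: "'k::comm_semiring_1 \<Rightarrow> 'k \<Rightarrow> var \<Rightarrow> 'k fa" where
  "toric \<alpha> \<beta> \<equiv> case_var (fa_smult \<alpha> (fa_var X1)) (fa_smult \<beta> (fa_var X2))"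

lemma toric_weight_Cons: "toric_weight \<alpha> \<beta> (a # w) = toric_weight \<alpha> \<beta> [a] * toric_weight \<alpha> \<beta> w"
  by (cases a) (simp_all add: toric_weight_def cnt_def mult_ac)

lemma toric_fa_single: "toric \<alpha> \<beta> a = fa_single (toric_weight \<alpha> \<beta> [a]) [a]"
  by (cases a) (auto simp: fa_single_def toric_weight_def fa_smult_def fa_var_def cnt_def)

lemma word_img_toric: "word_img (toric \<alpha> \<beta>) w = fa_single (toric_weight \<alpha> \<beta> w) w"
proof (induction w)
  case Nil
  then show ?case by (simp add: word_img_Nil fa_one_def fa_single_def toric_weight_def cnt_def)
next
  case (Cons a w)
  then show ?case
    by (simp add: word_img_Cons toric_fa_single fa_mult_fa_single toric_weight_Cons[of _ _ a w])
qed

lemma endo_toric: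
  assumes "p \<in> FA"
  shows "endo (toric \<alpha> \<beta>) p = (\<lambda>w. toric_weight \<alpha> \<beta> w * p w)"
proof
  fix z
  have fin: "finite {w. p w \<noteq> 0}" using assms by (simp add: FA_def)
  have "endo (toric \<alpha> \<beta>) p z = (\<Sum>w \<in> {w. p w \<noteq> 0}. if w = z then p z * toric_weight \<alpha> \<beta> z else 0)"
    unfolding endo_def word_img_toric fa_single_def by (rule sum.cong) auto
  also have "\<dots> = toric_weight \<alpha> \<beta> z * p z"
    by (simp add: fin mult.commute)
  finally show "endo (toric \<alpha> \<beta>) p z = toric_weight \<alpha> \<beta> z * p z" .
qed

lemma endo2_toric:
  assumes "t \<in> FA2"
  shows "endo2 (toric \<alpha> \<beta>) t (u, v) = toric_weight \<alpha> \<beta> u * toric_weight \<alpha> \<beta> v * t (u, v)"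
proof -
  have fin: "finite {uv. t uv \<noteq> 0}" using assms by (simp add: FA2_def)
  have "endo2 (toric \<alpha> \<beta>) t (u, v) = (\<Sum>x \<in> {uv. t uv \<noteq> 0}.
          if x = (u, v) then t (u, v) * toric_weight \<alpha> \<beta> u * toric_weight \<alpha> \<beta> v else 0)"
    unfolding endo2_def word_img_toric fa_single_def by (simp, rule sum.cong) (auto split: if_splits)
  also have "\<dots> = toric_weight \<alpha> \<beta> u * toric_weight \<alpha> \<beta> v * t (u, v)"
    by (simp add: fin mult_ac)
  finally show ?thesis .
qed

lemma braid_in_FA2: "t \<in> FA2 \<Longrightarrow> braid q t \<in> FA2"
proof -
  assume "t \<in> FA2"
  moreover have "{uv. braid q t uv \<noteq> 0} \<subseteq> prod.swap ` {uv. t uv \<noteq> 0}"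
    by (auto simp: braid_def image_iff)
  ultimately show ?thesis unfolding FA2_def by (auto intro: finite_subset)
qed

lemma fa_smult_fa_var_in_FA: "fa_smult c (fa_var a) \<in> (FA :: 'k::field fa set)"
proof -
  have "{w. fa_smult c (fa_var a :: 'k fa) w \<noteq> 0} \<subseteq> {[a]}"
    by (auto simp: fa_smult_def fa_var_def)
  then show ?thesis unfolding FA_def by (auto intro: finite_subset)
qed

lemma toric_in_Aut_braided:
  fixes \<alpha> \<beta> :: "'k::field"
  assumes "\<alpha> \<noteq> 0" "\<beta> \<noteq> 0"
  shows "(fa_smult \<alpha> (fa_var X1), fa_smult \<beta> (fa_var X2)) \<in> Aut_braided q"
proof -
  have weight_nonzero: "toric_weight \<alpha> \<beta> w \<noteq> 0" for w
    using assms by (simp add: toric_weight_def)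
  have scale_in_FA: "(\<lambda>w. c w * p w) \<in> FA" if "p \<in> FA" for p and c :: "word \<Rightarrow> 'k"
    using that unfolding FA_def by (auto intro: finite_subset)
  have "bij_betw (endo (toric \<alpha> \<beta>)) FA FA"
  proof (rule bij_betw_byWitness[where f' = "\<lambda>p w. inverse (toric_weight \<alpha> \<beta> w) * p w"])
    show "endo (toric \<alpha> \<beta>) ` FA \<subseteq> FA" "(\<lambda>p w. inverse (toric_weight \<alpha> \<beta> w) * p w) ` FA \<subseteq> FA"
      using scale_in_FA by (auto simp: endo_toric)
    show "\<forall>p \<in> FA. (\<lambda>w. inverse (toric_weight \<alpha> \<beta> w) * endo (toric \<alpha> \<beta>) p w) = p"
      "\<forall>p \<in> FA. endo (toric \<alpha> \<beta>) (\<lambda>w. inverse (toric_weight \<alpha> \<beta> w) * p w) = p"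
      using scale_in_FA weight_nonzero by (auto simp: endo_toric)
  qed
  moreover have "endo2 (toric \<alpha> \<beta>) (braid q t) = braid q (endo2 (toric \<alpha> \<beta>) t)"
    if "t \<in> FA2" for t
  proof (rule ext, clarify)
    fix u v
    have "endo2 (toric \<alpha> \<beta>) (braid q t) (u, v)
        = toric_weight \<alpha> \<beta> u * toric_weight \<alpha> \<beta> v * braid q t (u, v)"
      by (rule endo2_toric[OF braid_in_FA2[OF that]])
    then show "endo2 (toric \<alpha> \<beta>) (braid q t) (u, v) = braid q (endo2 (toric \<alpha> \<beta>) t) (u, v)"
      by (simp add: braid_def endo2_toric[OF that] mult_ac)
  qed
  ultimately show ?thesis
    unfolding Aut_braided_def is_aut_def by (auto simp: fa_smult_fa_var_in_FA)
qed

section \<open>Braided automorphisms\<close>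

lemma cnt_append [simp]: "cnt a (u @ v) = cnt a u + cnt a v"
  by (simp add: cnt_def)

lemma cnt_Nil [simp]: "cnt a [] = 0"
  by (simp add: cnt_def)

lemma cnt_single: "cnt a [b] = (if b = a then 1 else 0)"
  by (simp add: cnt_def)

lemma cnt_concat_replicate: "cnt a (concat (replicate n z)) = n * cnt a z"
  by (induction n) simp_all

definition fa2_single :: "'k::zero \<Rightarrow> word \<times> word \<Rightarrow> 'k fa2" where
  "fa2_single c x = (\<lambda>y. if y = x then c else 0)"

lemma fa2_single_in_FA2: "fa2_single c x \<in> FA2"
proof -
  have "{y. fa2_single c x y \<noteq> 0} \<subseteq> {x}" by (auto simp: fa2_single_def)
  then show ?thesis unfolding FA2_def by (auto intro: finite_subset)
qed

lemma endo2_fa2_single: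
  "endo2 f (fa2_single c (u, v)) (a, b) = c * word_img f u a * word_img f v b"
proof (cases "c = 0")
  case False
  then have "{y. fa2_single c (u, v) y \<noteq> 0} = {(u, v)}" by (auto simp: fa2_single_def)
  then show ?thesis by (simp add: endo2_def fa2_single_def)
qed (simp add: endo2_def fa2_single_def)

lemma braid_fa2_single: "braid q (fa2_single c (u, v)) = fa2_single (braid_coef q u v * c) (v, u)"
  by (auto simp: braid_def fa2_single_def fun_eq_iff)

lemma Aut_braided_support_coef:
  fixes f1 f2 :: "'k::idom fa"
  assumes "(f1, f2) \<in> Aut_braided q"
    and "case_var f1 f2 j a \<noteq> 0" "case_var f1 f2 i b \<noteq> 0"
  shows "braid_coef q [i] [j] = braid_coef q b a"
proof -
  let ?f = "case_var f1 f2" and ?t = "fa2_single 1 ([i], [j])"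
  have "\<forall>t \<in> FA2. endo2 ?f (braid q t) = braid q (endo2 ?f t)"
    using assms(1) unfolding Aut_braided_def by simp
  then have "endo2 ?f (braid q ?t) (a, b) = braid q (endo2 ?f ?t) (a, b)"
    using fa2_single_in_FA2 by metis
  then have "braid_coef q [i] [j] * (?f j a * ?f i b) = braid_coef q b a * (?f j a * ?f i b)"
    by (simp only: braid_fa2_single endo2_fa2_single)
      (simp add: braid_def endo2_fa2_single word_img_single mult_ac)
  then show ?thesis using assms(2,3) by simp
qed

lemma is_aut_generator_nonzero:
  fixes f :: "var \<Rightarrow> 'k::comm_semiring_1 fa"
  assumes "is_aut f"
  shows "f a \<noteq> (\<lambda>_. 0)"
proof
  assume "f a = (\<lambda>_. 0)"
  then have "endo f (fa_var a) = endo f (\<lambda>_. 0)" by (simp add: endo_fa_var endo_zero)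
  moreover have "inj_on (endo f) FA"
    using assms bij_betw_imp_inj_on unfolding is_aut_def by blast
  ultimately have "fa_var a = (\<lambda>_. 0 :: 'k)"
    using fa_var_in_FA zero_in_FA by (blast dest: inj_onD)
  then show False using fa_var_nonzero by blast
qed

lemma is_aut_leading_words_cover_letters:
  fixes f :: "var \<Rightarrow> 'k::semidom fa"
  assumes aut: "is_aut f" and lead: "\<And>a. is_leading_word (f a) (L a)"
    and inj: "inj (\<lambda>w. concat (map L w))" and nonempty: "\<And>a. L a \<noteq> []"
  shows "\<exists>a. L a = [c]"
proof -
  obtain p where p: "p \<in> FA" "endo f p = fa_var c"
    using aut fa_var_in_FA unfolding is_aut_def by (metis bij_betw_imp_surj_on imageE)
  have "p \<noteq> (\<lambda>_. 0)"
    using p(2) endo_zero fa_var_nonzero by metis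
  then have "\<exists>w. is_leading_word (endo f p) (concat (map L w))"
    by (rule leading_word_endo[OF p(1) _ lead inj])
  then obtain w where "is_leading_word (fa_var c :: 'k fa) (concat (map L w))"
    using p(2) by auto
  then have "concat (map L w) = [c]"
    using leading_word_fa_var by (rule leading_word_unique)
  then obtain a w' where "L a @ concat (map L w') = [c]"
    by (cases w) simp_all
  then have "L a = [c]" using nonempty[of a] by (cases "L a") simp_all
  then show ?thesis ..
qed

lemma leading_letter_imp_monomial:
  fixes p :: "'k::comm_semiring_1 fa"
  assumes "is_leading_word p [c]" and odd: "\<And>u. p u \<noteq> 0 \<Longrightarrow> odd (cnt c u)"
  shows "p = fa_smult (p [c]) (fa_var c)"
proof -
  have "u = [c]" if "p u \<noteq> 0" for u
  proof -
    have "rank [c] \<le> 2" by (cases c) (simp_all add: rank_def)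
    then have "u = [] \<or> u = [X1] \<or> u = [X2]"
      using that assms(1) unfolding is_leading_word_def by (meson order_trans rank_le_2)
    then show "u = [c]" using odd[OF that] by (auto simp: cnt_single split: if_splits)
  qed
  then show ?thesis by (auto simp: fun_eq_iff fa_smult_def fa_var_def)
qed

lemma inj_concat_map_if_parities:
  fixes L :: "var \<Rightarrow> word"
  assumes "odd (cnt X1 (L X1))" "even (cnt X2 (L X1))" "odd (cnt X2 (L X2))"
  shows "inj (\<lambda>w. concat (map L w))"
proof (rule injI, rule ccontr)
  fix ws ws' :: word
  assume "concat (map L ws) = concat (map L ws')" "ws \<noteq> ws'"
  then obtain z n where "\<And>c. L c = concat (replicate (n c) z)"
    using concat_map_relation_imp_common_power by metis
  then show False using assms by (simp add: cnt_concat_replicate)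
qed

lemma braid_coef_tau5:
  "braid_coef tau5 u v
     = (-1 :: 'k::comm_ring_1) ^ (cnt X1 u * cnt X2 v + cnt X2 u * cnt X1 v + cnt X2 u * cnt X2 v)"
  by (simp add: braid_coef_def tau5_def power_add)

lemma neg_one_power_eq_iff:
  assumes "(-1::'k::ring_1) \<noteq> 1"
  shows "(-1::'k) ^ m = (-1) ^ n \<longleftrightarrow> (even m \<longleftrightarrow> even n)"
  using assms by (simp add: minus_one_power_iff)

lemma neg_one_neq_one: "(2::'k::ring_1) \<noteq> 0 \<Longrightarrow> (-1::'k) \<noteq> 1"
  by (metis add.right_inverse one_add_one)

lemma Aut_braided_tau5_support_parity:
  assumes two: "(2::'k::field) \<noteq> 0" and aut: "(f1, f2) \<in> Aut_braided (tau5 :: var \<Rightarrow> var \<Rightarrow> 'k)"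
  shows "f1 u \<noteq> 0 \<Longrightarrow> odd (cnt X1 u) \<and> even (cnt X2 u)"
    and "f2 v \<noteq> 0 \<Longrightarrow> odd (cnt X2 v)"
proof -
  define N where "N u v = cnt X1 u * cnt X2 v + cnt X2 u * cnt X1 v + cnt X2 u * cnt X2 v" for u v
  have parity: "even (N [i] [j]) \<longleftrightarrow> even (N b a)"
    if "case_var f1 f2 j a \<noteq> 0" "case_var f1 f2 i b \<noteq> 0" for i j a b
  proof -
    have "(-1::'k) ^ N [i] [j] = (-1) ^ N b a"
      using Aut_braided_support_coef[OF aut that] by (simp only: braid_coef_tau5 N_def)
    then show ?thesis using neg_one_power_eq_iff[OF neg_one_neq_one[OF two]] by blast
  qed
  have diagonal: "even (N w w) \<longleftrightarrow> even (cnt X2 w)" for w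
  proof -
    have "N w w = 2 * (cnt X1 w * cnt X2 w) + cnt X2 w * cnt X2 w"
      by (simp only: N_def mult.commute[of "cnt X2 w" "cnt X1 w"] mult_2)
    then show ?thesis by simp
  qed
  show f2: "odd (cnt X2 v)" if "f2 v \<noteq> 0" for v
    using parity[of X2 v X2 v] that diagonal[of v] by (simp add: N_def cnt_single)
  show "odd (cnt X1 u) \<and> even (cnt X2 u)" if "f1 u \<noteq> 0"
  proof
    show "even (cnt X2 u)"
      using parity[of X1 u X1 u] that diagonal[of u] by (simp add: N_def cnt_single)
    have "f2 \<noteq> (\<lambda>_. 0)"
      using is_aut_generator_nonzero[of "case_var f1 f2" X2] aut unfolding Aut_braided_def by simp
    then obtain v where "f2 v \<noteq> 0" by auto
    then show "odd (cnt X1 u)"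
      using parity[of X2 v X1 u] that f2 \<open>even (cnt X2 u)\<close> by (simp add: N_def cnt_single)
  qed
qed

lemma Aut_braided_tau5_subset_G5:
  assumes two: "(2::'k::field) \<noteq> 0" and aut: "(f1, f2) \<in> Aut_braided (tau5 :: var \<Rightarrow> var \<Rightarrow> 'k)"
  shows "(f1, f2) \<in> G5"
proof -
  define f where "f = case_var f1 f2"
  note parity = Aut_braided_tau5_support_parity[OF two aut]
  have is_aut: "is_aut f" using aut by (simp add: Aut_braided_def f_def)
  have "\<exists>w. is_leading_word (f a) w" for a
    using is_aut is_aut_generator_nonzero[OF is_aut]
    by (intro leading_word_exists) (auto simp: is_aut_def intro: var.exhaust[of a])
  then obtain L where lead: "\<And>a. is_leading_word (f a) (L a)" by metis
  have L_parity: "odd (cnt X1 (L X1))" "even (cnt X2 (L X1))" "odd (cnt X2 (L X2))"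
    using lead[of X1] lead[of X2] parity unfolding is_leading_word_def f_def by auto
  then have "L a \<noteq> []" for a by (cases a) auto
  then have hit: "\<exists>a. L a = [c]" for c
    using is_aut_leading_words_cover_letters[OF is_aut lead inj_concat_map_if_parities[OF L_parity]]
    by blast
  have "L X1 = [X1]"
    using hit[of X1] L_parity by (metis cnt_single var.exhaust odd_one even_zero)
  moreover have "L X2 = [X2]"
    using hit[of X2] L_parity by (metis cnt_single var.exhaust odd_one even_zero)
  ultimately have "f1 = fa_smult (f1 [X1]) (fa_var X1)" "f2 = fa_smult (f2 [X2]) (fa_var X2)"
    "f1 [X1] \<noteq> 0" "f2 [X2] \<noteq> 0"
    using lead[of X1] lead[of X2] parity
    by (auto simp: f_def is_leading_word_def intro!: leading_letter_imp_monomial)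
  then show ?thesis unfolding G5_def by blast
qed

theorem lemma9:
  assumes "(2::'k::field) \<noteq> 0"
  shows "Aut_braided (tau5 :: var \<Rightarrow> var \<Rightarrow> 'k) = G5"
proof
  show "Aut_braided tau5 \<subseteq> (G5 :: ('k fa \<times> 'k fa) set)"
    using Aut_braided_tau5_subset_G5[OF assms] by auto
  show "(G5 :: ('k fa \<times> 'k fa) set) \<subseteq> Aut_braided tau5"
    unfolding G5_def using toric_in_Aut_braided by blast
qed

end
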